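(* Let $G$ be a connected graph of order $n$ with minimum degree $\delta=\delta(G)\geq 1+\sqrt{3n+4}$. Then $$prc(G)-rc(G)\geq \delta-\Big(\frac{3n}{\delta+1}+3\Big).$$
   Context: A path in an edge-coloured graph is a rainbow path if its edges receive pairwise distinct colours. The rainbow connection number $rc(G)$ of a connected graph $G$ is the minimum number of colours in an edge-colouring such that every two distinct vertices are joined by a rainbow path. The proper rainbow connection number $prc(G)$ is the minimum number of colours in a proper edge-colouring (adjacent edges get distinct colours) such that every two distinct vertices are joined by a rainbow path. *)

theory Defs
  imports Complex_Main
begin

definition simple_graph :: "'a set \<Rightarrow> 'a set set \<Rightarrow> bool" where
  "simple_graph V E \<longleftrightarrow> finite V \<and>
     (\<forall>e\<in>E. \<exists>u v. u \<noteq> v \<and> u \<in> V \<and> v \<in> V \<and> e = {u, v})"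

definition is_path :: "'a set \<Rightarrow> 'a set set \<Rightarrow> 'a list \<Rightarrow> bool" where
  "is_path V E xs \<longleftrightarrow> xs \<noteq> [] \<and> distinct xs \<and> set xs \<subseteq> V \<and>
     (\<forall>i. Suc i < length xs \<longrightarrow> {xs ! i, xs ! Suc i} \<in> E)"

definition path_edges :: "'a list \<Rightarrow> 'a set list" where
  "path_edges xs = map (\<lambda>i. {xs ! i, xs ! Suc i}) [0..<length xs - 1]"

definition rainbow_path :: "('a set \<Rightarrow> 'c) \<Rightarrow> 'a list \<Rightarrow> bool" where
  "rainbow_path c xs \<longleftrightarrow> distinct (map c (path_edges xs))"

definition graph_connected :: "'a set \<Rightarrow> 'a set set \<Rightarrow> bool" where
  "graph_connected V E \<longleftrightarrow> V \<noteq> {} \<and>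
     (\<forall>u\<in>V. \<forall>v\<in>V. \<exists>xs. is_path V E xs \<and> hd xs = u \<and> last xs = v)"

definition rainbow_connected :: "'a set \<Rightarrow> 'a set set \<Rightarrow> ('a set \<Rightarrow> nat) \<Rightarrow> bool" where
  "rainbow_connected V E c \<longleftrightarrow>
     (\<forall>u\<in>V. \<forall>v\<in>V. u \<noteq> v \<longrightarrow>
        (\<exists>xs. is_path V E xs \<and> hd xs = u \<and> last xs = v \<and> rainbow_path c xs))"

definition proper_edge_colouring :: "'a set set \<Rightarrow> ('a set \<Rightarrow> nat) \<Rightarrow> bool" where
  "proper_edge_colouring E c \<longleftrightarrow>
     (\<forall>e\<in>E. \<forall>f\<in>E. e \<noteq> f \<and> e \<inter> f \<noteq> {} \<longrightarrow> c e \<noteq> c f)"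

definition rc :: "'a set \<Rightarrow> 'a set set \<Rightarrow> nat" where
  "rc V E = (LEAST k. \<exists>c. c ` E \<subseteq> {..<k} \<and> rainbow_connected V E c)"

definition prc :: "'a set \<Rightarrow> 'a set set \<Rightarrow> nat" where
  "prc V E = (LEAST k. \<exists>c. c ` E \<subseteq> {..<k} \<and> proper_edge_colouring E c
                            \<and> rainbow_connected V E c)"

definition degree :: "'a set set \<Rightarrow> 'a \<Rightarrow> nat" where
  "degree E v = card {e\<in>E. v \<in> e}"

definition min_degree :: "'a set \<Rightarrow> 'a set set \<Rightarrow> nat" where
  "min_degree V E = Min (degree E ` V)"

end

theory Submission
  imports Defs
begin

text \<open>
  A proper colouring needs \<open>\<delta>\<close> colours at a vertex of minimum degree, so
  \<open>prc(G) \<ge> \<delta>\<close>, and it remains to show \<open>rc(G) \<le> 3n/(\<delta>+1) + 2\<close>.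
  Choose a connected vertex set \<open>D\<close>, with a spanning tree \<open>T\<close>, maximising \<open>|N[D]|\<close> subject to
  \<open>(\<delta>+1)(|D|+2) \<le> 3|N[D]|\<close>. Maximality forbids adding one, two or three suitable
  vertices to \<open>D\<close>; hence every vertex outside \<open>N[D]\<close> has two neighbours in
  \<open>N(D) = N[D] - D\<close>, and every vertex of \<open>N(D)\<close> has two neighbours in \<open>D\<close> or one in
  \<open>N(D)\<close>. Give the edges of \<open>T\<close> distinct colours and all other edges five colours,
  chosen along a maximal independent subset of \<open>N(D)\<close>, so that any two vertices
  reach \<open>D\<close> by rainbow walks with disjoint colour sets; joined through \<open>T\<close>, these
  give rainbow paths with \<open>|D| + 4 \<le> 3n/(\<delta>+1) + 2\<close> colours.
\<close>

section \<open>Walks\<close>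

fun walk_edges :: "'a list \<Rightarrow> 'a set list" where
  "walk_edges (x # y # xs) = {x, y} # walk_edges (y # xs)"
| "walk_edges _ = []"

lemma path_edges_eq_walk_edges: "path_edges xs = walk_edges xs"
proof (induction xs rule: walk_edges.induct)
  case (1 x y xs)
  have "[0..<length (x # y # xs) - 1] = 0 # map Suc [0..<length (y # xs) - 1]"
    by (simp add: map_Suc_upt upt_conv_Cons del: upt_Suc)
  then show ?case
    using 1 by (simp add: path_edges_def comp_def)
qed (simp_all add: path_edges_def)

lemma set_walk_edges: "set (walk_edges xs) = {{xs ! i, xs ! Suc i} | i. Suc i < length xs}"
  unfolding path_edges_eq_walk_edges[symmetric] path_edges_def by auto

lemma walk_edges_Cons: "ws \<noteq> [] \<Longrightarrow> walk_edges (x # ws) = {x, hd ws} # walk_edges ws"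
  by (cases ws) auto

lemma walk_edges_append: "walk_edges (xs @ y # ys) = walk_edges (xs @ [y]) @ walk_edges (y # ys)"
proof (induction xs)
  case (Cons x xs)
  then show ?case
    by (cases xs) auto
qed simp

lemma set_walk_edges_rev: "set (walk_edges (rev xs)) = set (walk_edges xs)"
proof (induction xs rule: walk_edges.induct)
  case (1 x y xs)
  then show ?case
    using walk_edges_append[of "rev xs" y "[x]"] by (auto simp: insert_commute)
qed auto

lemma walk_edge_subset: "e \<in> set (walk_edges xs) \<Longrightarrow> e \<subseteq> set xs"
  by (induction xs rule: walk_edges.induct) auto

lemma distinct_walk_edges: "distinct xs \<Longrightarrow> distinct (walk_edges xs)"
  by (induction xs rule: walk_edges.induct) (auto dest: walk_edge_subset)

definition walk :: "'a set \<Rightarrow> 'a set set \<Rightarrow> 'a list \<Rightarrow> bool" where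
  "walk V E ws \<longleftrightarrow> ws \<noteq> [] \<and> set ws \<subseteq> V \<and> set (walk_edges ws) \<subseteq> E"

lemma is_path_iff_walk: "is_path V E xs \<longleftrightarrow> walk V E xs \<and> distinct xs"
  unfolding is_path_def walk_def set_walk_edges by blast

lemma walk_singleton [simp]: "walk V E [v] \<longleftrightarrow> v \<in> V"
  by (simp add: walk_def)

lemma walk_mono: "walk V E ws \<Longrightarrow> V \<subseteq> V' \<Longrightarrow> E \<subseteq> E' \<Longrightarrow> walk V' E' ws"
  unfolding walk_def by blast

lemma walk_Cons: "walk V E ws \<Longrightarrow> x \<in> V \<Longrightarrow> {x, hd ws} \<in> E \<Longrightarrow> walk V E (x # ws)"
  by (simp add: walk_def walk_edges_Cons)

lemma walk_rev: "walk V E ws \<Longrightarrow> walk V E (rev ws)"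
  by (simp add: walk_def set_walk_edges_rev)

lemma walk_join:
  assumes "walk V E a" "walk V E b" "last a = hd b"
  shows "walk V E (a @ tl b)"
    and "set (walk_edges (a @ tl b)) = set (walk_edges a) \<union> set (walk_edges b)"
    and "hd (a @ tl b) = hd a" "last (a @ tl b) = last b"
proof -
  obtain as where a: "a = as @ [hd b]"
    using assms(1,3) unfolding walk_def by (metis append_butlast_last_id)
  obtain bs where b: "b = hd b # bs"
    using assms(2) unfolding walk_def by (metis list.collapse)
  have ab: "a @ tl b = as @ hd b # bs"
    using a b by (metis append.assoc append_Cons append_Nil list.sel(3))
  show edges: "set (walk_edges (a @ tl b)) = set (walk_edges a) \<union> set (walk_edges b)"
    unfolding ab using walk_edges_append[of as "hd b" bs] a b by simp
  show "walk V E (a @ tl b)"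
    using assms(1,2) unfolding walk_def edges by (auto dest: list.set_sel(2))
  show "hd (a @ tl b) = hd a"
    using assms(1) unfolding walk_def by simp
  show "last (a @ tl b) = last b"
    unfolding ab by (subst b) (cases bs, simp_all)
qed

lemma walk_via:
  assumes "walk V E a" "walk V E b" "walk V E c" "last a = hd b" "last b = last c"
  shows "\<exists>ws. walk V E ws \<and> hd ws = hd a \<and> last ws = hd c \<and>
    set (walk_edges ws) = set (walk_edges a) \<union> set (walk_edges b) \<union> set (walk_edges c)"
proof -
  note ab = walk_join[OF assms(1,2,4)]
  have "last (a @ tl b) = hd (rev c)"
    using ab(4) assms(5) by (simp add: hd_rev)
  note abc = walk_join[OF ab(1) walk_rev[OF assms(3)] this]
  show ?thesis
    using ab abc
    by (intro exI[of _ "(a @ tl b) @ tl (rev c)"]) (simp add: last_rev set_walk_edges_rev)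
qed

lemma walk_shortcut_to_path:
  assumes "walk V E ws"
  shows "\<exists>xs. is_path V E xs \<and> hd xs = hd ws \<and> last xs = last ws \<and>
    set (walk_edges xs) \<subseteq> set (walk_edges ws)"
  using assms
proof (induction "length ws" arbitrary: ws rule: less_induct)
  case less
  show ?case
  proof (cases "distinct ws")
    case True
    then show ?thesis
      using less.prems by (auto simp: is_path_iff_walk)
  next
    case False
    then obtain as y bs cs where "ws = as @ [y] @ bs @ [y] @ cs"
      using not_distinct_decomp by blast
    then have ws: "ws = as @ y # (bs @ y # cs)" by simp
    define ws' where "ws' = as @ y # cs"
    have "set (walk_edges ws') \<subseteq> set (walk_edges (as @ [y])) \<union> set (walk_edges (y # cs))"
      unfolding ws'_def walk_edges_append[of as y cs] by simp
    also have "\<dots> \<subseteq> set (walk_edges ws)"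
      using walk_edges_append[of "y # bs" y cs]
      unfolding ws walk_edges_append[of as y "bs @ y # cs"] by auto
    finally have edges: "set (walk_edges ws') \<subseteq> set (walk_edges ws)" .
    have "walk V E ws'"
      using less.prems edges unfolding walk_def ws ws'_def by auto
    moreover have "length ws' < length ws"
      unfolding ws ws'_def by simp
    ultimately obtain xs where xs: "is_path V E xs" "hd xs = hd ws'" "last xs = last ws'"
      "set (walk_edges xs) \<subseteq> set (walk_edges ws')"
      using less.hyps by blast
    moreover have "hd ws' = hd ws" "last ws' = last ws"
      unfolding ws ws'_def by (cases as; simp)+
    ultimately show ?thesis
      using edges by auto
  qed
qed

lemma rainbow_connectedI_walks:
  assumes "\<And>u v. u \<in> V \<Longrightarrow> v \<in> V \<Longrightarrow> u \<noteq> v \<Longrightarrow>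
    \<exists>ws. walk V E ws \<and> hd ws = u \<and> last ws = v \<and> inj_on c (set (walk_edges ws))"
  shows "rainbow_connected V E c"
  unfolding rainbow_connected_def
proof (intro ballI impI)
  fix u v
  assume "u \<in> V" "v \<in> V" "u \<noteq> v"
  then obtain ws where ws: "walk V E ws" "hd ws = u" "last ws = v" "inj_on c (set (walk_edges ws))"
    using assms by blast
  then obtain xs where xs: "is_path V E xs" "hd xs = u" "last xs = v"
    "set (walk_edges xs) \<subseteq> set (walk_edges ws)"
    using walk_shortcut_to_path[OF ws(1)] ws(2,3) by blast
  have "rainbow_path c xs"
    unfolding rainbow_path_def path_edges_eq_walk_edges distinct_map
    using xs(1,4) ws(4) by (auto simp: is_path_iff_walk distinct_walk_edges intro: inj_on_subset)
  with xs show "\<exists>xs. is_path V E xs \<and> hd xs = u \<and> last xs = v \<and> rainbow_path c xs"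
    by blast
qed

lemma walk_edges_crossing:
  "xs \<noteq> [] \<Longrightarrow> hd xs \<in> S \<Longrightarrow> last xs \<notin> S \<Longrightarrow>
    \<exists>p q. {p, q} \<in> set (walk_edges xs) \<and> p \<in> S \<and> q \<notin> S"
proof (induction xs rule: walk_edges.induct)
  case (1 x y xs)
  then show ?case
    by (cases "y \<in> S") fastforce+
qed auto

lemma graph_connected_iff_walks:
  "graph_connected V E \<longleftrightarrow>
    V \<noteq> {} \<and> (\<forall>u\<in>V. \<forall>v\<in>V. \<exists>ws. walk V E ws \<and> hd ws = u \<and> last ws = v)"
proof -
  have "(\<exists>xs. is_path V E xs \<and> hd xs = u \<and> last xs = v) \<longleftrightarrow>
    (\<exists>ws. walk V E ws \<and> hd ws = u \<and> last ws = v)" for u v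
    using walk_shortcut_to_path[of V E] by (auto simp: is_path_iff_walk)
  then show ?thesis
    unfolding graph_connected_def by blast
qed

lemma graph_connected_insert:
  assumes conn: "graph_connected D T" and d: "d \<in> D"
  shows "graph_connected (insert x D) (insert {x, d} T)"
proof -
  let ?D = "insert x D" and ?T = "insert {x, d} T"
  have walk_D: "walk ?D ?T ws" if "walk D T ws" for ws
    using walk_mono[OF that subset_insertI subset_insertI] .
  have from_x: "\<exists>ws. walk ?D ?T ws \<and> hd ws = x \<and> last ws = b" if "b \<in> ?D" for b
  proof (cases "b = x")
    case True
    then show ?thesis by (intro exI[of _ "[x]"]) simp
  next
    case False
    with that have "b \<in> D" by simp
    then obtain ws where ws: "walk D T ws" "hd ws = d" "last ws = b"
      using conn d unfolding graph_connected_iff_walks by blast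
    then have "walk ?D ?T (x # ws)"
      by (intro walk_Cons walk_D) auto
    moreover have "last (x # ws) = b"
      using ws by (simp add: walk_def)
    ultimately show ?thesis
      by (intro exI[of _ "x # ws"]) simp
  qed
  have "\<exists>ws. walk ?D ?T ws \<and> hd ws = a \<and> last ws = b" if ab: "a \<in> ?D" "b \<in> ?D" for a b
  proof -
    consider "a = x" | "b = x" | "a \<in> D" "b \<in> D"
      using ab by blast
    then show ?thesis
    proof cases
      case 2
      then obtain ws where "walk ?D ?T ws" "hd ws = b" "last ws = a"
        using from_x ab(1) by blast
      then show ?thesis
        by (intro exI[of _ "rev ws"]) (simp add: walk_rev hd_rev last_rev)
    next
      case 3
      then show ?thesis
        using conn walk_D unfolding graph_connected_iff_walks by blast
    qed (use from_x ab in blast)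
  qed
  then show ?thesis
    unfolding graph_connected_iff_walks by blast
qed

section \<open>Neighbourhoods in simple graphs\<close>

definition nbhd :: "'a set set \<Rightarrow> 'a \<Rightarrow> 'a set" where
  "nbhd E v = {w. {v, w} \<in> E}"

definition closed_nbhd :: "'a set set \<Rightarrow> 'a set \<Rightarrow> 'a set" where
  "closed_nbhd E D = D \<union> {w. \<exists>d\<in>D. {w, d} \<in> E}"

lemma closed_nbhd_mono: "D \<subseteq> D' \<Longrightarrow> closed_nbhd E D \<subseteq> closed_nbhd E D'"
  unfolding closed_nbhd_def by blast

lemma subset_closed_nbhd: "D \<subseteq> closed_nbhd E D"
  unfolding closed_nbhd_def by blast

lemma insert_nbhd_subset_closed_nbhd: "v \<in> D \<Longrightarrow> insert v (nbhd E v) \<subseteq> closed_nbhd E D"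
  unfolding closed_nbhd_def nbhd_def by (auto simp: insert_commute)

lemma nbhd_disjoint_if_not_in_closed_nbhd: "v \<notin> closed_nbhd E D \<Longrightarrow> nbhd E v \<inter> D = {}"
  unfolding closed_nbhd_def nbhd_def by (auto simp: insert_commute)

locale sgraph =
  fixes V :: "'a set" and E :: "'a set set"
  assumes simple: "simple_graph V E"
begin

lemma finite_vertices: "finite V"
  using simple by (simp add: simple_graph_def)

lemma edgeE:
  assumes "e \<in> E"
  obtains u v where "u \<noteq> v" "u \<in> V" "v \<in> V" "e = {u, v}"
  using simple assms unfolding simple_graph_def by blast

lemma edgeD: "{a, b} \<in> E \<Longrightarrow> a \<noteq> b \<and> a \<in> V \<and> b \<in> V"
  by (erule edgeE) (auto simp: doubleton_eq_iff)

lemma edge_subset: "e \<in> E \<Longrightarrow> e \<subseteq> V"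
  by (erule edgeE) simp

lemma finite_edges: "finite E"
proof (rule finite_subset)
  show "E \<subseteq> Pow V"
    using edge_subset by blast
qed (simp add: finite_vertices)

lemma nbhd_subset: "nbhd E v \<subseteq> V"
  unfolding nbhd_def using edgeD by blast

lemma finite_nbhd: "finite (nbhd E v)"
  using nbhd_subset finite_vertices by (rule finite_subset)

lemma not_in_nbhd: "v \<notin> nbhd E v"
  unfolding nbhd_def using edgeD by blast

lemma card_insert_nbhd: "card (insert v (nbhd E v)) = Suc (card (nbhd E v))"
  by (simp add: finite_nbhd not_in_nbhd)

lemma nbhd_Int_eq_singleton:
  assumes "card (nbhd E v \<inter> A) \<le> 1" "w \<in> nbhd E v \<inter> A"
  shows "nbhd E v \<inter> A = {w}"
  using assms card_le_Suc0_iff_eq[of "nbhd E v \<inter> A"] finite_nbhd by auto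

lemma card_nbhd: "card (nbhd E v) = degree E v"
proof -
  have "bij_betw (\<lambda>w. {v, w}) (nbhd E v) {e\<in>E. v \<in> e}"
  proof (rule bij_betwI')
    fix e
    assume e: "e \<in> {e\<in>E. v \<in> e}"
    then obtain a b where "e = {a, b}"
      by (metis (mono_tags, lifting) edgeE mem_Collect_eq)
    with e show "\<exists>w\<in>nbhd E v. e = {v, w}"
      unfolding nbhd_def by (auto simp: insert_commute)
  qed (auto simp: nbhd_def doubleton_eq_iff)
  then show ?thesis
    unfolding degree_def by (rule bij_betw_same_card)
qed

lemma min_degree_le_card_nbhd: "v \<in> V \<Longrightarrow> min_degree V E \<le> card (nbhd E v)"
  unfolding min_degree_def card_nbhd using finite_vertices by simp

lemma closed_nbhd_subset: "D \<subseteq> V \<Longrightarrow> closed_nbhd E D \<subseteq> V"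
  unfolding closed_nbhd_def using edgeD by blast

end

locale connected_sgraph = sgraph +
  assumes connected: "graph_connected V E"
begin

lemma degree_le_prc: "degree E v \<le> prc V E"
proof -
  let ?proper_rainbow =
    "\<lambda>k. \<exists>c. c ` E \<subseteq> {..<k} \<and> proper_edge_colouring E c \<and> rainbow_connected V E c"
  \<comment> \<open>An injective colouring is proper and rainbow connected, so the \<open>LEAST\<close> defining
    \<open>prc\<close> is attained.\<close>
  obtain h where h: "bij_betw h E {0..<card E}"
    using ex_bij_betw_finite_nat[OF finite_edges] by blast
  then have inj: "inj_on h E"
    by (rule bij_betw_imp_inj_on)
  have "?proper_rainbow (card E)"
  proof (intro exI conjI)
    show "h ` E \<subseteq> {..<card E}"
      using h by (auto simp: bij_betw_def)
    show "proper_edge_colouring E h"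
      using inj unfolding proper_edge_colouring_def inj_on_def by blast
    show "rainbow_connected V E h"
    proof (rule rainbow_connectedI_walks)
      fix u v
      assume "u \<in> V" "v \<in> V"
      then obtain ws where "walk V E ws" "hd ws = u" "last ws = v"
        using connected unfolding graph_connected_iff_walks by blast
      then show "\<exists>ws. walk V E ws \<and> hd ws = u \<and> last ws = v \<and> inj_on h (set (walk_edges ws))"
        using inj by (auto simp: walk_def intro: inj_on_subset)
    qed
  qed
  then have "?proper_rainbow (prc V E)"
    unfolding prc_def by (rule LeastI)
  then obtain c where c: "c ` E \<subseteq> {..<prc V E}" "proper_edge_colouring E c"
    by blast
  have "inj_on c {e\<in>E. v \<in> e}"
    using c(2) unfolding proper_edge_colouring_def inj_on_def by blast
  then have "degree E v = card (c ` {e\<in>E. v \<in> e})"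
    unfolding degree_def by (simp add: card_image)
  also have "\<dots> \<le> card {..<prc V E}"
    using c(1) by (intro card_mono) auto
  finally show ?thesis by simp
qed

lemma min_degree_le_prc: "min_degree V E \<le> prc V E"
proof -
  obtain v where "v \<in> V"
    using connected unfolding graph_connected_def by blast
  then have "min_degree V E \<le> degree E v"
    using min_degree_le_card_nbhd card_nbhd by simp
  then show ?thesis
    using degree_le_prc[of v] by linarith
qed

lemma edge_leaving:
  assumes "a \<in> S" "a \<in> V" "b \<in> V" "b \<notin> S"
  obtains p q where "{p, q} \<in> E" "p \<in> S" "q \<notin> S"
proof -
  obtain ws where "walk V E ws" "hd ws = a" "last ws = b"
    using connected assms(2,3) unfolding graph_connected_iff_walks by blast
  then show ?thesis
    using walk_edges_crossing[of ws S] assms(1,4) that unfolding walk_def by blast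
qed


lemma ex_distance_three_path:
  assumes "D \<subseteq> V" "D \<noteq> {}" and y: "y \<in> V" "y \<notin> closed_nbhd E D"
    and y_far: "nbhd E y \<inter> (closed_nbhd E D - D) = {}"
  obtains q p x where "q \<in> V" "q \<notin> closed_nbhd E D" "nbhd E q \<inter> (closed_nbhd E D - D) = {}"
    "{q, p} \<in> E" "p \<notin> closed_nbhd E D" "{p, x} \<in> E" "x \<in> closed_nbhd E D - D"
proof -
  let ?B = "closed_nbhd E D - D"
  define S where "S = closed_nbhd E D \<union> {w. nbhd E w \<inter> ?B \<noteq> {}}"
  obtain r where r: "r \<in> D"
    using assms(2) by blast
  obtain p q where pq: "{p, q} \<in> E" "p \<in> S" "q \<notin> S"
  proof (rule edge_leaving)
    show "r \<in> S" "r \<in> V"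
      using r assms(1) unfolding S_def closed_nbhd_def by auto
    show "y \<in> V" "y \<notin> S"
      using y y_far unfolding S_def by auto
  qed
  have q: "q \<in> V" "q \<notin> closed_nbhd E D" "nbhd E q \<inter> ?B = {}"
    using pq edgeD unfolding S_def by auto
  have qp: "{q, p} \<in> E"
    using pq(1) by (simp add: insert_commute)
  have "p \<notin> D"
    using qp q(2) unfolding closed_nbhd_def by blast
  moreover have "p \<notin> ?B"
    using qp q(3) unfolding nbhd_def by blast
  ultimately obtain x where "p \<notin> closed_nbhd E D" "{p, x} \<in> E" "x \<in> ?B"
    using pq(2) unfolding S_def nbhd_def by blast
  with q qp show ?thesis
    by (rule that)
qed
end

section \<open>A connected core with a large neighbourhood\<close>

text \<open>
  A connected graph on \<open>D\<close> with fewer edges than vertices is a spanning tree; only the bound on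
  its number of edges, which is the number of extra colours, matters below.
\<close>

definition tree_on :: "'a set \<Rightarrow> 'a set set \<Rightarrow> 'a set \<Rightarrow> 'a set set \<Rightarrow> bool" where
  "tree_on V E D T \<longleftrightarrow>
    D \<subseteq> V \<and> T \<subseteq> E \<and> (\<forall>e\<in>T. e \<subseteq> D) \<and> card T < card D \<and> graph_connected D T"

lemma tree_on_core_subset: "tree_on V E D T \<Longrightarrow> D \<subseteq> V"
  unfolding tree_on_def by simp

context sgraph
begin

lemma tree_on_singleton: "r \<in> V \<Longrightarrow> tree_on V E {r} {}"
  unfolding tree_on_def graph_connected_iff_walks by (auto intro!: exI[of _ "[r]"])

lemma tree_on_insert:
  assumes tree: "tree_on V E D T" and x: "x \<in> V" "x \<notin> D" and d: "d \<in> D" "{x, d} \<in> E"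
  shows "tree_on V E (insert x D) (insert {x, d} T)"
proof -
  have "finite D" "finite T"
    using tree finite_vertices finite_edges unfolding tree_on_def by (auto intro: finite_subset)
  then have "card (insert {x, d} T) \<le> Suc (card T)" "card (insert x D) = Suc (card D)"
    using x(2) by (simp_all add: card_insert_if)
  then have "card (insert {x, d} T) < card (insert x D)"
    using tree unfolding tree_on_def by linarith
  moreover have "graph_connected (insert x D) (insert {x, d} T)"
    using tree graph_connected_insert[OF _ d(1)] unfolding tree_on_def by blast
  ultimately show ?thesis
    using tree x(1) d unfolding tree_on_def by auto
qed

text \<open>
  The invariant of the greedy growth of the core: it holds for a single vertex, and it survives
  adding \<open>k\<close> vertices to \<open>D\<close> that bring at least \<open>(\<delta>+1)k/3\<close> new vertices into \<open>N[D]\<close>.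
\<close>

definition economical :: "'a set \<Rightarrow> 'a set set \<Rightarrow> bool" where
  "economical D T \<longleftrightarrow>
    tree_on V E D T \<and> (min_degree V E + 1) * (card D + 2) \<le> 3 * card (closed_nbhd E D)"

lemma card_closed_nbhd_le: "tree_on V E D T \<Longrightarrow> card (closed_nbhd E D) \<le> card V"
  unfolding tree_on_def by (intro card_mono finite_vertices closed_nbhd_subset) simp

end

context connected_sgraph
begin

lemma ex_maximal_economical:
  obtains D T where "economical D T"
    "\<And>D' T'. economical D' T' \<Longrightarrow> card (closed_nbhd E D') \<le> card (closed_nbhd E D)"
proof -
  obtain r where r: "r \<in> V"
    using connected unfolding graph_connected_def by blast
  have "min_degree V E + 1 \<le> card (insert r (nbhd E r))"
    using min_degree_le_card_nbhd[OF r] by (simp add: card_insert_nbhd)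
  also have "\<dots> \<le> card (closed_nbhd E {r})"
    using r closed_nbhd_subset[of "{r}"] finite_vertices
    by (intro card_mono insert_nbhd_subset_closed_nbhd) (auto intro: finite_subset)
  finally have "economical {r} {}"
    using r tree_on_singleton unfolding economical_def by simp
  then have start: "\<exists>T. economical {r} T"
    by blast
  have bounded: "\<forall>D. (\<exists>T. economical D T) \<longrightarrow> card (closed_nbhd E D) < card V + 1"
  proof (intro allI impI)
    fix D
    assume "\<exists>T. economical D T"
    then obtain T where "tree_on V E D T"
      unfolding economical_def by blast
    from card_closed_nbhd_le[OF this] show "card (closed_nbhd E D) < card V + 1"
      by simp
  qed
  obtain D where "\<exists>T. economical D T"
    and max: "\<forall>D'. (\<exists>T'. economical D' T') \<longrightarrow> card (closed_nbhd E D') \<le> card (closed_nbhd E D)"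
    using ex_has_greatest_nat[where P = "\<lambda>D. \<exists>T. economical D T", OF start bounded] by blast
  then obtain T where "economical D T"
    by blast
  then show ?thesis
    using that max by blast
qed

end

locale maximal_economical = connected_sgraph +
  fixes D :: "'a set" and T :: "'a set set"
  assumes economical: "economical D T"
    and maximal: "\<And>D' T'. economical D' T' \<Longrightarrow> card (closed_nbhd E D') \<le> card (closed_nbhd E D)"
begin

lemma tree: "tree_on V E D T"
  using economical unfolding economical_def by simp

lemma finite_core: "finite D"
  using tree_on_core_subset[OF tree] finite_vertices by (rule finite_subset)

lemma core_nonempty: "D \<noteq> {}"
  using tree unfolding tree_on_def by auto

lemma no_gainful_extension:
  assumes tree': "tree_on V E D' T'" and "D \<subseteq> D'" and card_D': "card D' = card D + k"
    and gain: "G \<subseteq> closed_nbhd E D'" "G \<inter> closed_nbhd E D = {}" "G \<noteq> {}"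
    and cheap: "(min_degree V E + 1) * k \<le> 3 * card G"
  shows False
proof -
  have fin: "finite (closed_nbhd E D')"
    using tree' closed_nbhd_subset finite_vertices unfolding tree_on_def by (meson finite_subset)
  then have "finite (closed_nbhd E D)" "finite G"
    using closed_nbhd_mono[OF \<open>D \<subseteq> D'\<close>] gain(1) by (auto intro: finite_subset)
  then have "card (closed_nbhd E D) + card G = card (closed_nbhd E D \<union> G)"
    using gain(2) by (subst card_Un_disjoint) (auto simp: Int_commute)
  also have "\<dots> \<le> card (closed_nbhd E D')"
    using fin closed_nbhd_mono[OF \<open>D \<subseteq> D'\<close>] gain(1) by (intro card_mono) auto
  finally have grows: "card (closed_nbhd E D) + card G \<le> card (closed_nbhd E D')" .
  have "(min_degree V E + 1) * (card D' + 2) =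
      (min_degree V E + 1) * (card D + 2) + (min_degree V E + 1) * k"
    unfolding card_D' by (simp add: algebra_simps)
  also have "\<dots> \<le> 3 * card (closed_nbhd E D')"
    using economical cheap grows unfolding economical_def by linarith
  finally have "economical D' T'"
    using tree' unfolding economical_def by simp
  then have "card (closed_nbhd E D') \<le> card (closed_nbhd E D)"
    by (rule maximal)
  moreover have "card G > 0"
    using \<open>finite G\<close> gain(3) by (simp add: card_gt_0_iff)
  ultimately show False
    using grows by linarith
qed

lemma outside_has_boundary_neighbour:
  assumes y: "y \<in> V" "y \<notin> closed_nbhd E D"
  shows "nbhd E y \<inter> (closed_nbhd E D - D) \<noteq> {}"
proof
  assume "nbhd E y \<inter> (closed_nbhd E D - D) = {}"
  then obtain q p x where q: "q \<in> V" "q \<notin> closed_nbhd E D" "nbhd E q \<inter> (closed_nbhd E D - D) = {}"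
    and p: "{q, p} \<in> E" "p \<notin> closed_nbhd E D" and x: "{p, x} \<in> E" "x \<in> closed_nbhd E D - D"
    using ex_distance_three_path[OF tree_on_core_subset[OF tree] core_nonempty y] by blast
  obtain d where d: "d \<in> D" "{x, d} \<in> E"
    using x(2) unfolding closed_nbhd_def by blast
  let ?D' = "insert q (insert p (insert x D))"
  have "tree_on V E ?D' (insert {q, p} (insert {p, x} (insert {x, d} T)))"
  proof (intro tree_on_insert tree)
    show "x \<in> V" "x \<notin> D"
      using x(2) d(2) edgeD by auto
    show "p \<in> V" "p \<notin> insert x D"
      using x p edgeD subset_closed_nbhd[of D E] by auto
    show "q \<in> V" "q \<notin> insert p (insert x D)"
      using q x(2) p edgeD subset_closed_nbhd[of D E] by auto
  qed (use d x p in auto)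
  then show False
  proof (rule no_gainful_extension)
    show "card ?D' = card D + 3"
      using finite_core q(2) p x(2) edgeD subset_closed_nbhd[of D E]
      by (auto simp: card_insert_if)
    show "insert q (nbhd E q) \<subseteq> closed_nbhd E ?D'"
      by (rule insert_nbhd_subset_closed_nbhd) simp
    show "insert q (nbhd E q) \<inter> closed_nbhd E D = {}"
      using q(2,3) nbhd_disjoint_if_not_in_closed_nbhd[OF q(2)] by blast
    show "(min_degree V E + 1) * 3 \<le> 3 * card (insert q (nbhd E q))"
      using min_degree_le_card_nbhd[OF q(1)] by (simp add: card_insert_nbhd)
  qed auto
qed

lemma outside_two_boundary_neighbours:
  assumes deg: "2 \<le> min_degree V E" and y: "y \<in> V" "y \<notin> closed_nbhd E D"
  shows "2 \<le> card (nbhd E y \<inter> (closed_nbhd E D - D))"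
proof (rule ccontr)
  let ?B = "closed_nbhd E D - D"
  assume "\<not> ?thesis"
  moreover obtain x where x: "x \<in> nbhd E y \<inter> ?B"
    using outside_has_boundary_neighbour[OF y] by blast
  ultimately have only_x: "nbhd E y \<inter> ?B = {x}"
    by (intro nbhd_Int_eq_singleton) auto
  obtain d where d: "d \<in> D" "{x, d} \<in> E"
    using x unfolding closed_nbhd_def by blast
  have yx: "{y, x} \<in> E"
    using x unfolding nbhd_def by simp
  let ?D' = "insert y (insert x D)" and ?G = "insert y (nbhd E y - {x})"
  have "tree_on V E ?D' (insert {y, x} (insert {x, d} T))"
  proof (intro tree_on_insert tree)
    show "x \<in> V" "x \<notin> D"
      using x d(2) edgeD by auto
    show "y \<notin> insert x D"
      using x y(2) subset_closed_nbhd[of D E] by auto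
  qed (use d y yx in auto)
  then show False
  proof (rule no_gainful_extension)
    show "card ?D' = card D + 2"
      using finite_core x y(2) subset_closed_nbhd[of D E] by (auto simp: card_insert_if)
    show "?G \<subseteq> closed_nbhd E ?D'"
      using insert_nbhd_subset_closed_nbhd[of y ?D' E] by blast
    show "?G \<inter> closed_nbhd E D = {}"
      using y(2) only_x nbhd_disjoint_if_not_in_closed_nbhd[OF y(2)] by blast
    have "card ?G = card (nbhd E y)"
      using x finite_nbhd not_in_nbhd[of y] card.remove[of "nbhd E y" x] by simp
    then have "min_degree V E \<le> card ?G"
      using min_degree_le_card_nbhd[OF y(1)] by simp
    with deg show "(min_degree V E + 1) * 2 \<le> 3 * card ?G"
      by presburger
  qed auto
qed

lemma boundary_vertex_well_attached:
  assumes deg: "2 \<le> min_degree V E" and x: "x \<in> closed_nbhd E D - D"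
  shows "2 \<le> card (nbhd E x \<inter> D) \<or> nbhd E x \<inter> (closed_nbhd E D - D) \<noteq> {}"
proof (rule ccontr)
  let ?B = "closed_nbhd E D - D"
  assume "\<not> ?thesis"
  then have few: "card (nbhd E x \<inter> D) \<le> 1" and x_isolated: "nbhd E x \<inter> ?B = {}"
    by auto
  obtain d where d: "d \<in> D" "{x, d} \<in> E"
    using x unfolding closed_nbhd_def by blast
  then have only_d: "nbhd E x \<inter> D = {d}"
    using few by (intro nbhd_Int_eq_singleton) (auto simp: nbhd_def)
  have x_V: "x \<in> V"
    using d(2) edgeD by blast
  let ?G = "nbhd E x - {d}"
  have "tree_on V E (insert x D) (insert {x, d} T)"
    using x x_V d by (intro tree_on_insert tree) auto
  then show False
  proof (rule no_gainful_extension)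
    show "card (insert x D) = card D + 1"
      using finite_core x by simp
    show "?G \<subseteq> closed_nbhd E (insert x D)"
      using insert_nbhd_subset_closed_nbhd[of x "insert x D" E] by blast
    show "?G \<inter> closed_nbhd E D = {}"
      using only_d x_isolated by blast
    have "card (nbhd E x) = Suc (card ?G)"
      using d(2) finite_nbhd by (intro card.remove) (simp_all add: nbhd_def)
    then have "min_degree V E \<le> Suc (card ?G)"
      using min_degree_le_card_nbhd[OF x_V] by simp
    with deg show "(min_degree V E + 1) * 1 \<le> 3 * card ?G" "?G \<noteq> {}"
      by (presburger, force)
  qed auto
qed

end

lemma (in connected_sgraph) ex_economical_well_attached:
  assumes "2 \<le> min_degree V E"
  obtains D T where "economical D T"
    "\<And>y. y \<in> V - closed_nbhd E D \<Longrightarrow> 2 \<le> card (nbhd E y \<inter> (closed_nbhd E D - D))"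
    "\<And>x. x \<in> closed_nbhd E D - D \<Longrightarrow>
      2 \<le> card (nbhd E x \<inter> D) \<or> nbhd E x \<inter> (closed_nbhd E D - D) \<noteq> {}"
proof -
  obtain D T where "economical D T"
    "\<And>D' T'. economical D' T' \<Longrightarrow> card (closed_nbhd E D') \<le> card (closed_nbhd E D)"
    by (fact ex_maximal_economical)
  then interpret maximal_economical V E D T
    by unfold_locales
  show ?thesis
    using that economical outside_two_boundary_neighbours boundary_vertex_well_attached assms
    by blast
qed

section \<open>Rainbow colourings through the core\<close>

definition rainbow_route ::
    "'a set \<Rightarrow> 'a set set \<Rightarrow> ('a set \<Rightarrow> nat) \<Rightarrow> 'a set \<Rightarrow> 'a \<Rightarrow> 'a list \<Rightarrow> bool" where
  "rainbow_route V E c D u ws \<longleftrightarrow>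
    walk V E ws \<and> hd ws = u \<and> last ws \<in> D \<and> inj_on c (set (walk_edges ws))"

abbreviation walk_colours :: "('a set \<Rightarrow> nat) \<Rightarrow> 'a list \<Rightarrow> nat set" where
  "walk_colours c ws \<equiv> c ` set (walk_edges ws)"

lemma inj_on_Un_disjoint_images:
  "inj_on f A \<Longrightarrow> inj_on f B \<Longrightarrow> f ` A \<inter> f ` B = {} \<Longrightarrow> inj_on f (A \<union> B)"
  unfolding inj_on_Un by blast

lemma (in sgraph) rainbow_connected_via_tree:
  assumes tree: "tree_on V E D T" and "inj_on c T" and "c ` (E - T) \<inter> c ` T = {}"
    and routes: "\<And>u v. u \<in> V \<Longrightarrow> v \<in> V \<Longrightarrow> \<exists>ru rv.
      rainbow_route V (E - T) c D u ru \<and> rainbow_route V (E - T) c D v rv \<and>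
      walk_colours c ru \<inter> walk_colours c rv = {}"
  shows "rainbow_connected V E c"
proof (rule rainbow_connectedI_walks)
  fix u v
  assume "u \<in> V" "v \<in> V"
  then obtain ru rv where
    ru: "rainbow_route V (E - T) c D u ru" and rv: "rainbow_route V (E - T) c D v rv"
    and disjoint: "walk_colours c ru \<inter> walk_colours c rv = {}"
    using routes by blast
  have T: "T \<subseteq> E" "graph_connected D T" "D \<subseteq> V"
    using tree unfolding tree_on_def by auto
  then obtain tw where tw: "walk D T tw" "hd tw = last ru" "last tw = last rv"
    using ru rv unfolding rainbow_route_def graph_connected_iff_walks by blast
  have "walk V E ru" "walk V E tw" "walk V E rv"
    using ru rv tw(1) T unfolding rainbow_route_def by (auto elim: walk_mono)
  then obtain ws where ws: "walk V E ws" "hd ws = u" "last ws = v"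
    and edges:
      "set (walk_edges ws) = set (walk_edges ru) \<union> set (walk_edges tw) \<union> set (walk_edges rv)"
    using walk_via[of V E ru tw rv] tw ru rv unfolding rainbow_route_def by auto
  have "set (walk_edges ru) \<union> set (walk_edges rv) \<subseteq> E - T" "set (walk_edges tw) \<subseteq> T"
    using ru rv tw(1) unfolding rainbow_route_def walk_def by auto
  then have "walk_colours c ru \<inter> walk_colours c tw = {}"
    and "walk_colours c tw \<inter> walk_colours c rv = {}"
    using assms(3) by blast+
  moreover have "inj_on c (set (walk_edges tw))"
    using assms(2) \<open>set (walk_edges tw) \<subseteq> T\<close> by (rule inj_on_subset)
  ultimately have "inj_on c (set (walk_edges ws))"
    using ru rv disjoint unfolding edges rainbow_route_def
    by (intro inj_on_Un_disjoint_images) (auto simp: image_Un)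
  with ws show "\<exists>ws. walk V E ws \<and> hd ws = u \<and> last ws = v \<and> inj_on c (set (walk_edges ws))"
    by blast
qed

lemma rainbow_route_cong:
  assumes "\<forall>e\<in>E. c e = c' e"
  shows "rainbow_route V E c D u ws \<longleftrightarrow> rainbow_route V E c' D u ws"
    and "rainbow_route V E c D u ws \<Longrightarrow> walk_colours c ws = walk_colours c' ws"
  using assms inj_on_cong[of "set (walk_edges ws)" c c'] unfolding rainbow_route_def walk_def
  by (blast, auto intro!: image_cong)

lemma (in sgraph) rc_less_card_core_add:
  assumes tree: "tree_on V E D T" and palette: "c ` (E - T) \<subseteq> {..<k}"
    and routes: "\<And>u v. u \<in> V \<Longrightarrow> v \<in> V \<Longrightarrow> \<exists>ru rv.
      rainbow_route V (E - T) c D u ru \<and> rainbow_route V (E - T) c D v rv \<and>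
      walk_colours c ru \<inter> walk_colours c rv = {}"
  shows "rc V E < card D + k"
proof -
  have "T \<subseteq> E" "card T < card D"
    using tree unfolding tree_on_def by auto
  then obtain h where h: "bij_betw h T {0..<card T}"
    using ex_bij_betw_finite_nat finite_subset[OF _ finite_edges] by blast
  define c' where "c' e = (if e \<in> T then k + h e else c e)" for e
  have tree_colours: "inj_on c' T" "c' ` T \<subseteq> {k..<k + card T}"
    using h unfolding c'_def bij_betw_def inj_on_def by auto
  have other_colours: "c' ` (E - T) \<subseteq> {..<k}"
    using palette unfolding c'_def by auto
  have "rainbow_connected V E c'"
  proof (rule rainbow_connected_via_tree[OF tree tree_colours(1)])
    have "{..<k} \<inter> {k..<k + card T} = {}"
      by auto
    then show "c' ` (E - T) \<inter> c' ` T = {}"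
      using tree_colours(2) other_colours by blast
    fix u v
    assume "u \<in> V" "v \<in> V"
    then obtain ru rv where routes_c: "rainbow_route V (E - T) c D u ru"
      "rainbow_route V (E - T) c D v rv" "walk_colours c ru \<inter> walk_colours c rv = {}"
      using routes by blast
    have "\<forall>e\<in>E - T. c e = c' e"
      by (simp add: c'_def)
    note same = rainbow_route_cong[OF this]
    show "\<exists>ru rv. rainbow_route V (E - T) c' D u ru \<and> rainbow_route V (E - T) c' D v rv \<and>
      walk_colours c' ru \<inter> walk_colours c' rv = {}"
      using routes_c same(1) same(2)[OF routes_c(1)] same(2)[OF routes_c(2)]
      by (intro exI[of _ ru] exI[of _ rv]) simp
  qed
  moreover have "c' ` E \<subseteq> {..<k + card T}"
  proof -
    have "c' ` E \<subseteq> c' ` (E - T) \<union> c' ` T"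
      by blast
    also have "\<dots> \<subseteq> {..<k} \<union> {k..<k + card T}"
      using other_colours tree_colours(2) by (rule Un_mono)
    finally show ?thesis
      by auto
  qed
  ultimately have "rc V E \<le> k + card T"
    unfolding rc_def by (intro Least_le) blast
  then show ?thesis
    using \<open>card T < card D\<close> by linarith
qed

lemma (in sgraph) ex_maximal_independent:
  assumes "X \<subseteq> V"
  shows "\<exists>I. I \<subseteq> X \<and> (\<forall>a\<in>I. \<forall>b\<in>I. {a, b} \<notin> E) \<and> (\<forall>x\<in>X - I. \<exists>w\<in>I. {x, w} \<in> E)"
proof -
  define independent where "independent I \<longleftrightarrow> I \<subseteq> X \<and> (\<forall>a\<in>I. \<forall>b\<in>I. {a, b} \<notin> E)" for I
  have "finite (Pow X)"
    using assms finite_vertices by (simp add: finite_subset)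
  moreover have "Collect independent \<subseteq> Pow X"
    unfolding independent_def by blast
  ultimately have "finite (Collect independent)"
    by (rule finite_subset[rotated])
  moreover have "Collect independent \<noteq> {}"
    using mem_Collect_eq[of "{}" independent] unfolding independent_def by blast
  ultimately obtain I where I: "I \<in> Collect independent"
    and max: "\<forall>J\<in>Collect independent. I \<subseteq> J \<longrightarrow> I = J"
    by (rule finite_has_maximal[THEN bexE])
  have "\<exists>w\<in>I. {x, w} \<in> E" if x: "x \<in> X - I" for x
  proof (rule ccontr)
    assume x_free: "\<not> ?thesis"
    have "{a, b} \<notin> E" if "a \<in> insert x I" "b \<in> insert x I" for a b
      using that I x_free edgeD[of x x] unfolding independent_def by (auto simp: insert_commute)
    then have "independent (insert x I)"
      using I x unfolding independent_def by simp
    then show False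
      using max x by blast
  qed
  then show ?thesis
    using I unfolding independent_def by blast
qed

locale attached_core = sgraph +
  fixes D :: "'a set" and T :: "'a set set"
  assumes tree: "tree_on V E D T"
    and outside_attached:
      "\<And>y. y \<in> V - closed_nbhd E D \<Longrightarrow> 2 \<le> card (nbhd E y \<inter> (closed_nbhd E D - D))"
    and boundary_attached: "\<And>x. x \<in> closed_nbhd E D - D \<Longrightarrow>
      2 \<le> card (nbhd E x \<inter> D) \<or> nbhd E x \<inter> (closed_nbhd E D - D) \<noteq> {}"
begin

abbreviation boundary :: "'a set" where
  "boundary \<equiv> closed_nbhd E D - D"

abbreviation far :: "'a set" where
  "far \<equiv> V - closed_nbhd E D"

lemma boundary_subset: "boundary \<subseteq> V"
  using closed_nbhd_subset[OF tree_on_core_subset[OF tree]] by blast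

lemma far_disjoint: "y \<in> far \<Longrightarrow> y \<notin> D \<and> y \<notin> boundary"
  using subset_closed_nbhd[of D E] by blast

lemma ex_core_neighbour: "x \<in> boundary \<Longrightarrow> \<exists>d\<in>D. {x, d} \<in> E"
  unfolding closed_nbhd_def by blast

definition core_nbr :: "'a \<Rightarrow> 'a" where
  "core_nbr x = (SOME d. d \<in> D \<and> {x, d} \<in> E)"

lemma core_nbr: "x \<in> boundary \<Longrightarrow> core_nbr x \<in> D \<and> {x, core_nbr x} \<in> E"
  unfolding core_nbr_def using ex_core_neighbour by (rule someI2_bex)

definition boundary_nbr :: "'a \<Rightarrow> 'a" where
  "boundary_nbr y = (SOME x. x \<in> boundary \<and> {y, x} \<in> E)"

lemma boundary_nbr: "y \<in> far \<Longrightarrow> boundary_nbr y \<in> boundary \<and> {y, boundary_nbr y} \<in> E"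
proof -
  assume "y \<in> far"
  then have "nbhd E y \<inter> boundary \<noteq> {}"
    using outside_attached[of y] by (metis card.empty not_numeral_le_zero)
  then have "\<exists>x. x \<in> boundary \<and> {y, x} \<in> E"
    unfolding nbhd_def by blast
  then show ?thesis
    unfolding boundary_nbr_def by (rule someI_ex)
qed

lemma other_boundary_nbr:
  assumes "y \<in> far"
  obtains x where "x \<in> boundary" "{y, x} \<in> E" "x \<noteq> boundary_nbr y"
proof -
  have "2 \<le> card (nbhd E y \<inter> boundary)"
    using assms outside_attached by blast
  moreover have "card (nbhd E y \<inter> boundary) \<le> 1" if "nbhd E y \<inter> boundary \<subseteq> {boundary_nbr y}"
    using card_mono[OF _ that] by simp
  ultimately have "\<not> nbhd E y \<inter> boundary \<subseteq> {boundary_nbr y}"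
    by linarith
  then show ?thesis
    using that unfolding nbhd_def by blast
qed

definition indep :: "'a set" where
  "indep = (SOME I. I \<subseteq> boundary \<and> (\<forall>a\<in>I. \<forall>b\<in>I. {a, b} \<notin> E) \<and>
    (\<forall>x\<in>boundary - I. \<exists>w\<in>I. {x, w} \<in> E))"

lemma indep: "indep \<subseteq> boundary" "\<And>a b. a \<in> indep \<Longrightarrow> b \<in> indep \<Longrightarrow> {a, b} \<notin> E"
  "\<And>x. x \<in> boundary \<Longrightarrow> x \<notin> indep \<Longrightarrow> \<exists>w\<in>indep. {x, w} \<in> E"
proof -
  have "indep \<subseteq> boundary \<and> (\<forall>a\<in>indep. \<forall>b\<in>indep. {a, b} \<notin> E) \<and>
    (\<forall>x\<in>boundary - indep. \<exists>w\<in>indep. {x, w} \<in> E)"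
    unfolding indep_def by (rule someI_ex[OF ex_maximal_independent[OF boundary_subset]])
  then show "indep \<subseteq> boundary" "\<And>a b. a \<in> indep \<Longrightarrow> b \<in> indep \<Longrightarrow> {a, b} \<notin> E"
    "\<And>x. x \<in> boundary \<Longrightarrow> x \<notin> indep \<Longrightarrow> \<exists>w\<in>indep. {x, w} \<in> E"
    by auto
qed

text \<open>Its values on tree edges are irrelevant: \<open>rc_less_card_core_add\<close> recolours them.\<close>

definition palette :: "'a set \<Rightarrow> nat" where
  "palette e =
    (if e \<subseteq> boundary then 2
     else if \<exists>x\<in>indep. e = {x, core_nbr x} then 0
     else if e \<inter> boundary \<noteq> {} \<and> e \<inter> D \<noteq> {} then 1
     else if \<exists>y\<in>far. e = {y, boundary_nbr y} then 3
     else 4)"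

definition direct_colour :: "'a \<Rightarrow> nat" where
  "direct_colour x = (if x \<in> indep then 0 else 1)"

lemma palette_less: "palette e < 5"
  unfolding palette_def by simp

lemma palette_boundary_edge: "x \<in> boundary \<Longrightarrow> x' \<in> boundary \<Longrightarrow> palette {x, x'} = 2"
  unfolding palette_def by simp

lemma palette_core_edge:
  assumes x: "x \<in> boundary" and d: "d \<in> D"
  shows "palette {x, d} = (if x \<in> indep \<and> d = core_nbr x then 0 else 1)"
proof -
  have "\<not> {x, d} \<subseteq> boundary" "{x, d} \<inter> boundary \<noteq> {}" "{x, d} \<inter> D \<noteq> {}"
    using x d by auto
  moreover have "(\<exists>x'\<in>indep. {x, d} = {x', core_nbr x'}) \<longleftrightarrow> x \<in> indep \<and> d = core_nbr x"
  proof
    assume "\<exists>x'\<in>indep. {x, d} = {x', core_nbr x'}"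
    then obtain x' where x': "x' \<in> indep" "{x, d} = {x', core_nbr x'}"
      by blast
    then have "x' \<notin> D"
      using indep(1) by blast
    moreover have "core_nbr x' \<in> D"
      using core_nbr x'(1) indep(1) by blast
    ultimately show "x \<in> indep \<and> d = core_nbr x"
      using x x' by (auto simp: doubleton_eq_iff)
  qed blast
  ultimately show ?thesis
    unfolding palette_def by presburger
qed

lemma palette_core_nbr: "x \<in> boundary \<Longrightarrow> palette {x, core_nbr x} = direct_colour x"
  using palette_core_edge core_nbr unfolding direct_colour_def by simp

lemma palette_far_edge:
  assumes y: "y \<in> far" and x: "x \<in> boundary"
  shows "palette {y, x} = (if x = boundary_nbr y then 3 else 4)"
proof -
  have y': "y \<notin> D" "y \<notin> boundary"
    using far_disjoint[OF y] by auto
  have "\<not> {y, x} \<subseteq> boundary" "{y, x} \<inter> D = {}"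
    using x y' by auto
  moreover have "\<not> (\<exists>x'\<in>indep. {y, x} = {x', core_nbr x'})"
    using y' indep(1) core_nbr by (auto simp: doubleton_eq_iff)
  moreover have "(\<exists>y'\<in>far. {y, x} = {y', boundary_nbr y'}) \<longleftrightarrow> x = boundary_nbr y"
    using y x far_disjoint by (auto simp: doubleton_eq_iff)
  ultimately show ?thesis
    unfolding palette_def by presburger
qed

abbreviation route :: "'a \<Rightarrow> 'a list \<Rightarrow> bool" where
  "route \<equiv> rainbow_route V (E - T) palette D"

lemma route_core: "d \<in> D \<Longrightarrow> route d [d]"
  using tree_on_core_subset[OF tree] unfolding rainbow_route_def by auto

lemma route_Cons:
  assumes r: "route w r" and e: "{y, w} \<in> E" "y \<notin> D"
    and fresh: "palette {y, w} \<notin> walk_colours palette r"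
  shows "route y (y # r)"
    and "walk_colours palette (y # r) = insert (palette {y, w}) (walk_colours palette r)"
proof -
  have r': "walk V (E - T) r" "hd r = w" "last r \<in> D" "inj_on palette (set (walk_edges r))"
    using r unfolding rainbow_route_def by auto
  then have edges: "walk_edges (y # r) = {y, w} # walk_edges r"
    unfolding walk_def by (simp add: walk_edges_Cons)
  show "walk_colours palette (y # r) = insert (palette {y, w}) (walk_colours palette r)"
    unfolding edges by simp
  have "{y, w} \<notin> T"
    using tree e(2) unfolding tree_on_def by blast
  then have "walk V (E - T) (y # r)"
    using r' e(1) edgeD by (intro walk_Cons) auto
  moreover have "inj_on palette (set (walk_edges (y # r)))"
    using r'(4) fresh unfolding edges by (simp add: inj_on_insert) blast
  ultimately show "route y (y # r)"
    using r' unfolding rainbow_route_def walk_def by simp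
qed

lemma route_to_core:
  assumes "x \<in> boundary" "d \<in> D" "{x, d} \<in> E"
  shows "route x [x, d]" "walk_colours palette [x, d] = {palette {x, d}}"
  using route_Cons[OF route_core] assms by auto

lemma route_via_boundary:
  assumes x: "x \<in> boundary" and w: "w \<in> boundary" "{x, w} \<in> E"
  shows "route x [x, w, core_nbr w]"
    and "walk_colours palette [x, w, core_nbr w] = {2, direct_colour w}"
proof -
  have "core_nbr w \<in> D" "{w, core_nbr w} \<in> E"
    using core_nbr[OF w(1)] by auto
  note w_route = route_to_core[OF w(1) this]
  have colours: "walk_colours palette [w, core_nbr w] = {direct_colour w}"
    using w_route(2) palette_core_nbr[OF w(1)] by simp
  have "palette {x, w} \<notin> walk_colours palette [w, core_nbr w]"
    unfolding colours palette_boundary_edge[OF x w(1)] direct_colour_def by simp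
  from route_Cons[OF w_route(1) w(2) _ this] x
  show "route x [x, w, core_nbr w]" "walk_colours palette [x, w, core_nbr w] = {2, direct_colour w}"
    unfolding colours palette_boundary_edge[OF x w(1)] by auto
qed

lemma direct_route:
  assumes "x \<in> boundary"
  shows "\<exists>r. route x r \<and> walk_colours palette r = {direct_colour x}"
proof -
  have "core_nbr x \<in> D" "{x, core_nbr x} \<in> E"
    using core_nbr[OF assms] by auto
  from route_to_core[OF assms this] show ?thesis
    using palette_core_nbr[OF assms] by (intro exI[of _ "[x, core_nbr x]"]) simp
qed

text \<open>
  The detour takes a second edge into \<open>D\<close>, or steps to a boundary neighbour of the other
  class and continues along that neighbour's direct edge.
\<close>

lemma detour_route:
  assumes x: "x \<in> boundary"
  shows "\<exists>r. route x r \<and> walk_colours palette r \<subseteq> {1 - direct_colour x, 2}"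
proof (cases "x \<in> indep")
  case True
  show ?thesis
  proof (cases "\<exists>d\<in>D. d \<noteq> core_nbr x \<and> {x, d} \<in> E")
    case True
    then obtain d where d: "d \<in> D" "d \<noteq> core_nbr x" "{x, d} \<in> E"
      by blast
    then show ?thesis
      using route_to_core[OF x d(1,3)] palette_core_edge[OF x d(1)] \<open>x \<in> indep\<close>
      unfolding direct_colour_def by auto
  next
    case False
    then have "nbhd E x \<inter> D \<subseteq> {core_nbr x}"
      unfolding nbhd_def by auto
    then have "card (nbhd E x \<inter> D) \<le> 1"
      using card_mono[of "{core_nbr x}"] by fastforce
    then obtain w where w: "w \<in> boundary" "{x, w} \<in> E"
      using boundary_attached[OF x] unfolding nbhd_def by auto
    then have "w \<notin> indep"
      using indep(2) \<open>x \<in> indep\<close> by blast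
    then show ?thesis
      using route_via_boundary[OF x w] \<open>x \<in> indep\<close> unfolding direct_colour_def
      by (intro exI[of _ "[x, w, core_nbr w]"]) auto
  qed
next
  case False
  then obtain w where w: "w \<in> indep" "{x, w} \<in> E"
    using indep(3)[OF x] by blast
  then show ?thesis
    using route_via_boundary[OF x _ w(2)] indep(1) False unfolding direct_colour_def
    by (intro exI[of _ "[x, w, core_nbr w]"]) auto
qed

lemma boundary_routes_disjoint_colours:
  assumes "x \<in> boundary" "x' \<in> boundary"
  shows "\<exists>r r'. route x r \<and> route x' r' \<and>
    walk_colours palette r \<inter> walk_colours palette r' = {} \<and>
    walk_colours palette r \<union> walk_colours palette r' \<subseteq> {0, 1, 2}"
proof -
  obtain r where r: "route x r" "walk_colours palette r = {direct_colour x}"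
    using direct_route[OF assms(1)] by blast
  obtain r' where r': "route x' r'" "walk_colours palette r' \<subseteq> {1 - direct_colour x, 2}"
  proof (cases "direct_colour x' = direct_colour x")
    case True
    then show ?thesis
      using detour_route[OF assms(2)] that by auto
  next
    case False
    then have "direct_colour x' = 1 - direct_colour x"
      unfolding direct_colour_def by (auto split: if_splits)
    then show ?thesis
      using direct_route[OF assms(2)] that by auto
  qed
  have "direct_colour x \<in> {0, 1}"
    unfolding direct_colour_def by simp
  then show ?thesis
    using r r' by (intro exI[of _ r] exI[of _ r']) auto
qed

text \<open>
  A far vertex enters \<open>N(D)\<close> along an edge of colour 3 or 4 as requested, so two far vertices
  can avoid each other's colour.
\<close>

lemma anchored_route:
  assumes u: "u \<in> V" "u \<notin> D" and k: "k \<in> {3, 4}"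
  obtains x where "x \<in> boundary"
    "\<And>r. route x r \<Longrightarrow> walk_colours palette r \<subseteq> {0, 1, 2} \<Longrightarrow>
      \<exists>r'. route u r' \<and> walk_colours palette r' \<subseteq> insert k (walk_colours palette r)"
proof (cases "u \<in> boundary")
  case True
  then show ?thesis
    using that by blast
next
  case False
  then have far: "u \<in> far"
    using u by blast
  obtain x where x: "x \<in> boundary" "{u, x} \<in> E" and colour: "palette {u, x} = k"
  proof (cases "k = 3")
    case True
    then show ?thesis
      using that boundary_nbr[OF far] palette_far_edge[OF far] by auto
  next
    case False
    then have "k = 4"
      using k by simp
    obtain x where "x \<in> boundary" "{u, x} \<in> E" "x \<noteq> boundary_nbr u"
      using other_boundary_nbr[OF far] by blast
    then show ?thesis
      using that palette_far_edge[OF far] \<open>k = 4\<close> by auto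
  qed
  have "\<exists>r'. route u r' \<and> walk_colours palette r' \<subseteq> insert k (walk_colours palette r)"
    if "route x r" "walk_colours palette r \<subseteq> {0, 1, 2}" for r
  proof -
    have "palette {u, x} \<notin> walk_colours palette r"
      using that(2) colour k by auto
    from route_Cons[OF that(1) x(2) u(2) this] show ?thesis
      unfolding colour by blast
  qed
  with x(1) show ?thesis
    by (rule that)
qed

lemma ex_route:
  assumes v: "v \<in> V"
  shows "\<exists>r. route v r"
proof (cases "v \<in> D")
  case True
  then show ?thesis
    using route_core by blast
next
  case False
  have "(3::nat) \<in> {3, 4}"
    by simp
  obtain x where "x \<in> boundary" and lift: "\<And>r. route x r \<Longrightarrow> walk_colours palette r \<subseteq> {0, 1, 2} \<Longrightarrow>
    \<exists>r'. route v r' \<and> walk_colours palette r' \<subseteq> insert 3 (walk_colours palette r)"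
    by (fact anchored_route[OF v False \<open>3 \<in> {3, 4}\<close>])
  moreover obtain r where "route x r" "walk_colours palette r = {direct_colour x}"
    using direct_route[OF \<open>x \<in> boundary\<close>] by blast
  moreover have "{direct_colour x} \<subseteq> {0, 1, 2}"
    unfolding direct_colour_def by simp
  ultimately show ?thesis
    by (metis (no_types, lifting))
qed

lemma routes_off_core_disjoint_colours:
  assumes "u \<in> V" "u \<notin> D" "v \<in> V" "v \<notin> D"
  shows "\<exists>ru rv. route u ru \<and> route v rv \<and> walk_colours palette ru \<inter> walk_colours palette rv = {}"
proof -
  have three: "(3::nat) \<in> {3, 4}" and four: "(4::nat) \<in> {3, 4}"
    by simp_all
  obtain x where x: "x \<in> boundary"
    and lift_u: "\<And>r. route x r \<Longrightarrow> walk_colours palette r \<subseteq> {0, 1, 2} \<Longrightarrow>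
    \<exists>r'. route u r' \<and> walk_colours palette r' \<subseteq> insert 3 (walk_colours palette r)"
    by (fact anchored_route[OF assms(1,2) three])
  obtain x' where x': "x' \<in> boundary"
    and lift_v: "\<And>r. route x' r \<Longrightarrow> walk_colours palette r \<subseteq> {0, 1, 2} \<Longrightarrow>
    \<exists>r'. route v r' \<and> walk_colours palette r' \<subseteq> insert 4 (walk_colours palette r)"
    by (fact anchored_route[OF assms(3,4) four])
  obtain r r' where rr: "route x r" "route x' r'"
    "walk_colours palette r \<inter> walk_colours palette r' = {}"
    "walk_colours palette r \<union> walk_colours palette r' \<subseteq> {0, 1, 2}"
    using boundary_routes_disjoint_colours[OF x x'] by blast
  have small: "walk_colours palette r \<subseteq> {0, 1, 2}" "walk_colours palette r' \<subseteq> {0, 1, 2}"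
    using rr(4) by auto
  obtain ru where ru: "route u ru" "walk_colours palette ru \<subseteq> insert 3 (walk_colours palette r)"
    using lift_u[OF rr(1) small(1)] by blast
  obtain rv where rv: "route v rv" "walk_colours palette rv \<subseteq> insert 4 (walk_colours palette r')"
    using lift_v[OF rr(2) small(2)] by blast
  have "insert 3 A \<inter> insert 4 B = {}"
    if "A \<inter> B = {}" "A \<subseteq> {0, 1, 2}" "B \<subseteq> {0, 1, 2}" for A B :: "nat set"
    using that by auto
  from this[OF rr(3) small] have "walk_colours palette ru \<inter> walk_colours palette rv = {}"
    using Int_mono[OF ru(2) rv(2)] by (metis subset_empty)
  then show ?thesis
    using ru(1) rv(1) by blast
qed

lemma ex_routes_disjoint_colours:
  assumes "u \<in> V" "v \<in> V"
  shows "\<exists>ru rv. route u ru \<and> route v rv \<and> walk_colours palette ru \<inter> walk_colours palette rv = {}"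
proof -
  consider "u \<in> D" | "v \<in> D" | "u \<notin> D" "v \<notin> D"
    by blast
  then show ?thesis
  proof cases
    case 1
    then show ?thesis
      using route_core ex_route[OF assms(2)] by fastforce
  next
    case 2
    then show ?thesis
      using route_core ex_route[OF assms(1)] by fastforce
  next
    case 3
    with assms show ?thesis
      by (intro routes_off_core_disjoint_colours)
  qed
qed

lemma rc_le_card_core_add_4: "rc V E \<le> card D + 4"
proof -
  have "palette ` (E - T) \<subseteq> {..<5}"
    using palette_less by auto
  from rc_less_card_core_add[OF tree this ex_routes_disjoint_colours] show ?thesis
    by simp
qed

end

context connected_sgraph
begin

lemma rc_le_card_div_min_degree:
  assumes "2 \<le> min_degree V E"
  shows "real (rc V E) \<le> 3 * real (card V) / (real (min_degree V E) + 1) + 2"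
proof -
  obtain D T where economical: "economical D T"
    and outside: "\<And>y. y \<in> V - closed_nbhd E D \<Longrightarrow> 2 \<le> card (nbhd E y \<inter> (closed_nbhd E D - D))"
    and boundary: "\<And>x. x \<in> closed_nbhd E D - D \<Longrightarrow>
      2 \<le> card (nbhd E x \<inter> D) \<or> nbhd E x \<inter> (closed_nbhd E D - D) \<noteq> {}"
    by (fact ex_economical_well_attached[OF assms])
  have tree: "tree_on V E D T"
    using economical unfolding economical_def by simp
  interpret attached_core V E D T
    using tree outside boundary by unfold_locales
  have "(min_degree V E + 1) * (card D + 2) \<le> 3 * card V"
    using economical card_closed_nbhd_le[OF tree] unfolding economical_def by linarith
  then have "real ((min_degree V E + 1) * (card D + 2)) \<le> real (3 * card V)"
    by (simp only: of_nat_le_iff)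
  then have "(real (min_degree V E) + 1) * (real (card D) + 2) \<le> 3 * real (card V)"
    by (simp add: algebra_simps)
  then have "real (card D) + 2 \<le> 3 * real (card V) / (real (min_degree V E) + 1)"
    by (simp add: field_simps)
  moreover have "rc V E \<le> card D + 4"
    by (fact rc_le_card_core_add_4)
  ultimately show ?thesis
    by linarith
qed

end

theorem theorem3p3:
  fixes V :: "'a set" and E :: "'a set set"
  assumes "simple_graph V E"
    and "graph_connected V E"
    and "real (min_degree V E) \<ge> 1 + sqrt (3 * real (card V) + 4)"
  shows "real (prc V E) - real (rc V E)
           \<ge> real (min_degree V E) - (3 * real (card V) / (real (min_degree V E) + 1) + 3)"
proof -
  interpret connected_sgraph V E
    using assms(1,2) by unfold_locales
  have "sqrt 4 \<le> sqrt (3 * real (card V) + 4)"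
    by (intro real_sqrt_le_mono) simp
  then have "2 \<le> min_degree V E"
    using assms(3) by simp
  then show ?thesis
    using rc_le_card_div_min_degree min_degree_le_prc by fastforce
qed

end
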